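(* Let $J=p\ge1$, $\sigma_\varepsilon^2>0$, $\sigma_\gamma^2>0$, $0\le\rho\le1$, and let $\mathbf{\Sigma}_\gamma$ be the autoregressive covariance matrix with entries $(\mathbf{\Sigma}_\gamma)_{jj'}=\sigma_\gamma^2\rho^{|j-j'|}$. Let $\mathbf{A}_{\bm\beta}$ be a nonsingular $J\times J$ matrix and $I>0$. For an approximate design $\xi=(I_1,\dots,I_J)$ (reals $I_j\ge0$ with $\sum_jI_j=I$) let $$\mathbf{M}_{\bm\beta}(\xi)=\mathbf{A}_{\bm\beta}^{\mathrm T}\mathbf{M}_0(\xi)^{1/2}\big(\sigma_\varepsilon^2\mathbf{I}_J+\mathbf{M}_0(\xi)^{1/2}\mathbf{\Sigma}_\gamma\mathbf{M}_0(\xi)^{1/2}\big)^{-1}\mathbf{M}_0(\xi)^{1/2}\mathbf{A}_{\bm\beta},\quad \mathbf{M}_0(\xi)^{1/2}=\mathrm{diag}(\sqrt{I_1},\dots,\sqrt{I_J}).$$ Then the $D$-optimal approximate design $\xi^*=(I_1^*,\dots,I_J^* )$ is symmetric in time, i.e. $I_j^*=I_{J-j+1}^*$ for all $j=1,\dots,J$.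
   Context: $\mathbf{A}_{\bm\beta}$ is the Jacobian of the mean response curve at a fixed parameter $\bm\beta$. $\bm\beta$ is estimable under $\xi$ if $\mathbf{A}_{\bm\beta}$ has full column rank and its columns lie in the column space of $\mathrm{diag}(I_1,\dots,I_J)$. A design $\xi^*$ is $D$-optimal if $\log\det\mathbf{M}_{\bm\beta}(\xi^* )\ge\log\det\mathbf{M}_{\bm\beta}(\xi)$ for all approximate designs $\xi$ with total $I$ under which $\bm\beta$ is estimable. *)

theory Defs
  imports "Jordan_Normal_Form.Determinant" "Jordan_Normal_Form.Gauss_Jordan_Elimination"
begin

text \<open>Indices are 0-based: j = 0..J-1 corresponds to the paper's j = 1..J.\<close>

definition ar_cov :: "nat \<Rightarrow> real \<Rightarrow> real \<Rightarrow> real mat" where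
  "ar_cov J sg2 rho = mat J J (\<lambda>(i, j). sg2 * rho ^ (if i \<le> j then j - i else i - j))"

definition M0_half :: "nat \<Rightarrow> (nat \<Rightarrow> real) \<Rightarrow> real mat" where
  "M0_half J xi = mat J J (\<lambda>(i, j). if i = j then sqrt (xi i) else 0)"

definition diag_design :: "nat \<Rightarrow> (nat \<Rightarrow> real) \<Rightarrow> real mat" where
  "diag_design J xi = mat J J (\<lambda>(i, j). if i = j then xi i else 0)"

text \<open>Matrix inverse (the matrices inverted below are invertible).\<close>
definition minv :: "real mat \<Rightarrow> real mat" where
  "minv B = the (mat_inverse B)"

definition info_mat :: "nat \<Rightarrow> real \<Rightarrow> real mat \<Rightarrow> real mat \<Rightarrow> (nat \<Rightarrow> real) \<Rightarrow> real mat" where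
  "info_mat J se2 Sg A xi =
     transpose_mat A * M0_half J xi *
     minv (se2 \<cdot>\<^sub>m 1\<^sub>m J + M0_half J xi * Sg * M0_half J xi) *
     M0_half J xi * A"

definition approx_design :: "nat \<Rightarrow> real \<Rightarrow> (nat \<Rightarrow> real) \<Rightarrow> bool" where
  "approx_design J I xi \<longleftrightarrow> (\<forall>j<J. xi j \<ge> 0) \<and> (\<Sum>j<J. xi j) = I"

definition estimable :: "nat \<Rightarrow> real mat \<Rightarrow> (nat \<Rightarrow> real) \<Rightarrow> bool" where
  "estimable J A xi \<longleftrightarrow>
     (\<forall>v \<in> carrier_vec (dim_col A). A *\<^sub>v v = 0\<^sub>v (dim_row A) \<longrightarrow> v = 0\<^sub>v (dim_col A)) \<and>
     (\<forall>k < dim_col A. \<exists>w \<in> carrier_vec J. col A k = diag_design J xi *\<^sub>v w)"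

definition D_optimal :: "nat \<Rightarrow> real \<Rightarrow> real \<Rightarrow> real mat \<Rightarrow> real mat \<Rightarrow> (nat \<Rightarrow> real) \<Rightarrow> bool" where
  "D_optimal J I se2 Sg A xi \<longleftrightarrow>
     approx_design J I xi \<and> estimable J A xi \<and>
     (\<forall>xi'. approx_design J I xi' \<and> estimable J A xi' \<longrightarrow>
        ln (det (info_mat J se2 Sg A xi)) \<ge> ln (det (info_mat J se2 Sg A xi')))"

end

theory Submission
  imports Defs
begin

(* For a design with all I_j > 0 one has M_beta = A^T C^-1 A with C = se2 M_0^-1 + Sigma,
   so det M_beta = det(A)^2 / det C. Expanding the determinant of a diagonal-plus-matrix,
   det C is a sum over index sets K of the monomials prod_(j not in K) se2 / I_j weighted
   by the principal minors of Sigma on K. These minors are nonnegative since Sigma is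
   positive semidefinite, and the K = {} term has weight 1. Each monomial is midpoint convex
   by AM-GM, strictly so for K = {}, hence det C is strictly midpoint convex in the design.
   Sigma is invariant under time reversal, so det C is too. A D-optimal design is positive
   by estimability; if it were not symmetric, averaging it with its reversal would give an
   admissible design with strictly smaller det C, i.e. strictly larger det M_beta. *)

section \<open>Determinants of structured matrices\<close>

lemma det_mat_eq_sum_permutes:
  "det (mat n n f) = (\<Sum>p | p permutes {0..<n}. signof p * (\<Prod>i=0..<n. f (i, p i)))"
proof -
  have "det (mat n n f) = (\<Sum>p | p permutes {0..<n}. signof p * (\<Prod>i=0..<n. mat n n f $$ (i, p i)))"
    by (rule det_def') simp
  also have "\<dots> = (\<Sum>p | p permutes {0..<n}. signof p * (\<Prod>i=0..<n. f (i, p i)))"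
    by (intro sum.cong prod.cong refl arg_cong2[where f = times]) (simp add: permutes_in_image)
  finally show ?thesis .
qed

lemma det_mat_permute_conj:
  assumes r: "r permutes {0..<n}"
  shows "det (mat n n (\<lambda>(i, j). f (r i, r j))) = det (mat n n f)"
proof -
  let ?R = "mat n n (\<lambda>(i, j). f (i, r j))"
  let ?T = "transpose_mat (mat n n f)"
  have r_lt: "i < n \<Longrightarrow> r i < n" for i using r by (simp add: permutes_in_image)
  have "mat n n (\<lambda>(i, j). f (r i, r j)) = mat n n (\<lambda>(i, j). ?R $$ (r i, j))"
    by (rule eq_matI) (auto simp: r_lt)
  then have "det (mat n n (\<lambda>(i, j). f (r i, r j))) = signof r * det ?R"
    using det_permute_rows[OF _ r, of ?R] by simp
  also have "det ?R = det (transpose_mat ?R)"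
    by (simp add: det_transpose[of ?R n])
  also have "transpose_mat ?R = mat n n (\<lambda>(i, j). ?T $$ (r i, j))"
    by (rule eq_matI) (auto simp: r_lt)
  also have "det \<dots> = signof r * det ?T"
    by (rule det_permute_rows[OF _ r]) simp
  also have "det ?T = det (mat n n f)"
    by (rule det_transpose[of _ n]) simp
  finally show ?thesis by (simp add: sign_def)
qed

lemma det_mat_diag: "det (mat_diag n f) = (\<Prod>i=0..<n. f i)"
proof -
  have "upper_triangular (mat_diag n f)"
    by (auto simp: upper_triangular_def mat_diag_def)
  then have "det (mat_diag n f) = prod_list (diag_mat (mat_diag n f))"
    by (rule det_upper_triangular[of _ n]) simp
  also have "\<dots> = (\<Prod>i=0..<n. f i)"
    unfolding prod_list_diag_prod by (simp add: mat_diag_def)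
  finally show ?thesis .
qed

lemma mat_diag_sandwich:
  assumes M: "M \<in> carrier_mat n n"
  shows "mat_diag n f * M * mat_diag n f = mat n n (\<lambda>(i, j). f i * M $$ (i, j) * f j)"
proof -
  have "mat_diag n f * M * mat_diag n f = mat n n (\<lambda>(i, j). f i * M $$ (i, j)) * mat_diag n f"
    by (simp add: mat_diag_mult_left[OF M])
  also have "\<dots> = mat n n (\<lambda>(i, j). f i * M $$ (i, j) * f j)"
    by (subst mat_diag_mult_right[of _ n]) (auto intro!: eq_matI)
  finally show ?thesis .
qed

lemma mat_diag_mult_vec:
  assumes "v \<in> carrier_vec n" "i < n"
  shows "(mat_diag n f *\<^sub>v v) $ i = f i * v $ i"
proof -
  have "(mat_diag n f *\<^sub>v v) $ i = (\<Sum>j=0..<n. (if i = j then f j else 0) * v $ j)"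
    using assms by (simp add: mat_diag_def scalar_prod_def)
  also have "\<dots> = (\<Sum>j=0..<n. if j = i then f i * v $ i else 0)"
    by (rule sum.cong) auto
  finally show ?thesis using assms(2) by simp
qed

lemma minv_right_inverse:
  assumes B: "B \<in> carrier_mat n n" and "det B \<noteq> 0"
  shows "B * minv B = 1\<^sub>m n" and "minv B \<in> carrier_mat n n"
proof -
  obtain Bi where Bi: "mat_inverse B = Some Bi"
    using mat_inverse(1)[OF B] det_non_zero_imp_unit[OF B \<open>det B \<noteq> 0\<close>] by fastforce
  then show "B * minv B = 1\<^sub>m n" and "minv B \<in> carrier_mat n n"
    using mat_inverse(2)[OF B Bi] by (simp_all add: minv_def)
qed

text \<open>The minor of S on K, written as an n x n determinant by padding with the identity
  outside K.\<close>
definition principal_minor :: "nat \<Rightarrow> nat set \<Rightarrow> (nat \<Rightarrow> nat \<Rightarrow> 'a :: comm_ring_1) \<Rightarrow> 'a" where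
  "principal_minor n K S =
     det (mat n n (\<lambda>(i, j). if i \<in> K \<and> j \<in> K then S i j else if i = j then 1 else 0))"

lemma principal_minor_empty [simp]: "principal_minor n {} S = 1"
proof -
  have "mat n n (\<lambda>(i, j). if i \<in> {} \<and> j \<in> {} then S i j else if i = j then 1 else 0) = 1\<^sub>m n"
    by (rule eq_matI) auto
  then show ?thesis by (simp add: principal_minor_def)
qed

lemma leibniz_term_diag_plus:
  fixes a :: "nat \<Rightarrow> 'a :: comm_ring_1"
  assumes p: "p permutes U" and K: "K \<subseteq> U" and U: "finite U"
  shows "(\<Prod>i\<in>K. S i (p i)) * (\<Prod>i\<in>U - K. if i = p i then a i else 0)
    = (\<Prod>i\<in>U - K. a i) * (\<Prod>i\<in>U. if i \<in> K \<and> p i \<in> K then S i (p i) else if i = p i then 1 else 0)"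
proof (cases "\<forall>i\<in>U - K. p i = i")
  case True
  have pK: "p i \<in> K" if i: "i \<in> K" for i
  proof (rule ccontr)
    assume "p i \<notin> K"
    moreover have "p i \<in> U" using i K p by (simp add: permutes_in_image subset_iff)
    ultimately have "p (p i) = p i" using True by blast
    then have "p i = i" using permutes_inj[OF p] by (simp add: inj_eq)
    with i \<open>p i \<notin> K\<close> show False by simp
  qed
  have "(\<Prod>i\<in>U. if i \<in> K \<and> p i \<in> K then S i (p i) else if i = p i then 1 else 0)
      = (\<Prod>i\<in>U - K. if i \<in> K \<and> p i \<in> K then S i (p i) else if i = p i then 1 else 0)
        * (\<Prod>i\<in>K. if i \<in> K \<and> p i \<in> K then S i (p i) else if i = p i then 1 else 0)"
    by (rule prod.subset_diff[OF K U])
  also have "\<dots> = (\<Prod>i\<in>U - K. 1) * (\<Prod>i\<in>K. S i (p i))"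
    using True pK by (intro arg_cong2[where f = times] prod.cong) auto
  finally have "(\<Prod>i\<in>U. if i \<in> K \<and> p i \<in> K then S i (p i) else if i = p i then 1 else 0)
      = (\<Prod>i\<in>K. S i (p i))" by simp
  moreover have "(\<Prod>i\<in>U - K. if i = p i then a i else 0) = (\<Prod>i\<in>U - K. a i)"
    using True by (intro prod.cong) auto
  ultimately show ?thesis by (simp add: mult.commute)
next
  case False
  then obtain k where k: "k \<in> U - K" "p k \<noteq> k" by auto
  have "(\<Prod>i\<in>U - K. if i = p i then a i else 0) = 0"
    using k U by (intro prod_zero) (auto intro!: bexI[of _ k])
  moreover have "(\<Prod>i\<in>U. if i \<in> K \<and> p i \<in> K then S i (p i) else if i = p i then 1 else 0) = 0"
    using k U by (intro prod_zero) (auto intro!: bexI[of _ k])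
  ultimately show ?thesis by simp
qed

lemma det_diag_plus:
  fixes a :: "nat \<Rightarrow> 'a :: comm_ring_1"
  shows "det (mat n n (\<lambda>(i, j). (if i = j then a i else 0) + S i j))
    = (\<Sum>K\<in>Pow {0..<n}. (\<Prod>i\<in>{0..<n} - K. a i) * principal_minor n K S)"
proof -
  let ?U = "{0..<n}"
  let ?E = "\<lambda>K i j. if i \<in> K \<and> j \<in> K then S i j else if i = j then 1 else 0"
  have "det (mat n n (\<lambda>(i, j). (if i = j then a i else 0) + S i j))
      = (\<Sum>p | p permutes ?U. signof p * (\<Prod>i\<in>?U. S i (p i) + (if i = p i then a i else 0)))"
    by (simp add: det_mat_eq_sum_permutes add.commute)
  also have "\<dots> = (\<Sum>p | p permutes ?U. \<Sum>K\<in>Pow ?U.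
      signof p * ((\<Prod>i\<in>?U - K. a i) * (\<Prod>i\<in>?U. ?E K i (p i))))"
    by (intro sum.cong refl)
      (simp add: prod_add sum_distrib_left leibniz_term_diag_plus Pow_def)
  also have "\<dots> = (\<Sum>K\<in>Pow ?U. (\<Prod>i\<in>?U - K. a i) *
      (\<Sum>p | p permutes ?U. signof p * (\<Prod>i\<in>?U. ?E K i (p i))))"
    by (subst sum.swap) (simp add: sum_distrib_left ac_simps)
  finally show ?thesis
    by (simp add: principal_minor_def det_mat_eq_sum_permutes)
qed

section \<open>Positive semidefinite kernels\<close>

definition pos_semidef :: "nat \<Rightarrow> (nat \<Rightarrow> nat \<Rightarrow> real) \<Rightarrow> bool" where
  "pos_semidef n S \<longleftrightarrow> (\<forall>v. 0 \<le> (\<Sum>i=0..<n. \<Sum>j=0..<n. v i * S i j * v j))"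

lemma pos_semidef_cong:
  assumes "\<And>i j. i < n \<Longrightarrow> j < n \<Longrightarrow> S i j = T i j"
  shows "pos_semidef n S \<longleftrightarrow> pos_semidef n T"
  using assms unfolding pos_semidef_def by simp

lemma pos_semidef_gram: "pos_semidef n (\<lambda>i j. \<Sum>k<m. L i k * L j k)"
  unfolding pos_semidef_def
proof
  fix v :: "nat \<Rightarrow> real"
  have "(\<Sum>i=0..<n. \<Sum>j=0..<n. v i * (\<Sum>k<m. L i k * L j k) * v j)
      = (\<Sum>k<m. (\<Sum>i=0..<n. v i * L i k) * (\<Sum>j=0..<n. v j * L j k))"
    by (simp add: sum_product sum_distrib_left sum_distrib_right ac_simps sum.swap[of _ "{..<m}"])
  also have "\<dots> \<ge> 0"
    by (intro sum_nonneg) simp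
  finally show "0 \<le> (\<Sum>i=0..<n. \<Sum>j=0..<n. v i * (\<Sum>k<m. L i k * L j k) * v j)" .
qed

lemma pos_semidef_scale:
  assumes "pos_semidef n S" "0 \<le> c"
  shows "pos_semidef n (\<lambda>i j. c * S i j)"
  unfolding pos_semidef_def
proof
  fix v :: "nat \<Rightarrow> real"
  have "(\<Sum>i=0..<n. \<Sum>j=0..<n. v i * (c * S i j) * v j) = c * (\<Sum>i=0..<n. \<Sum>j=0..<n. v i * S i j * v j)"
    by (simp add: sum_distrib_left ac_simps)
  with assms show "0 \<le> (\<Sum>i=0..<n. \<Sum>j=0..<n. v i * (c * S i j) * v j)"
    unfolding pos_semidef_def by simp
qed

lemma pos_semidef_pad_identity:
  assumes "pos_semidef n S"
  shows "pos_semidef n (\<lambda>i j. if i \<in> K \<and> j \<in> K then S i j else if i = j then 1 else 0)"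
  unfolding pos_semidef_def
proof
  fix v :: "nat \<Rightarrow> real"
  define w where "w i = (if i \<in> K then v i else 0)" for i
  have "v i * (if i \<in> K \<and> j \<in> K then S i j else if i = j then 1 else 0) * v j
      = (if i = j \<and> i \<notin> K then v i ^ 2 else 0) + w i * S i j * w j" for i j
    by (auto simp: w_def power2_eq_square)
  then have "(\<Sum>i=0..<n. \<Sum>j=0..<n. v i * (if i \<in> K \<and> j \<in> K then S i j else if i = j then 1 else 0) * v j)
      = (\<Sum>i=0..<n. \<Sum>j=0..<n. if i = j \<and> i \<notin> K then v i ^ 2 else 0)
        + (\<Sum>i=0..<n. \<Sum>j=0..<n. w i * S i j * w j)"
    by (simp add: sum.distrib)
  moreover have "0 \<le> (\<Sum>i=0..<n. \<Sum>j=0..<n. w i * S i j * w j)"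
    using assms unfolding pos_semidef_def by blast
  moreover have "0 \<le> (\<Sum>i=0..<n. \<Sum>j=0..<n. if i = j \<and> i \<notin> K then v i ^ 2 else 0)"
    by (intro sum_nonneg) auto
  ultimately show "0 \<le> (\<Sum>i=0..<n. \<Sum>j=0..<n. v i * (if i \<in> K \<and> j \<in> K then S i j else if i = j then 1 else 0) * v j)"
    by linarith
qed

lemma det_convex_identity_pos_semidef_nonzero:
  assumes E: "pos_semidef n E" and s: "0 \<le> s" "s < 1"
  shows "det (mat n n (\<lambda>(i, j). (if i = j then 1 - s else 0) + s * E i j)) \<noteq> 0"
proof
  let ?M = "mat n n (\<lambda>(i, j). (if i = j then 1 - s else 0) + s * E i j)"
  assume "det ?M = 0"
  then obtain v where v: "v \<in> carrier_vec n" "v \<noteq> 0\<^sub>v n" "?M *\<^sub>v v = 0\<^sub>v n"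
    using det_0_iff_vec_prod_zero[of ?M n] by auto
  define w where "w i = v $ i" for i
  obtain k where k: "k < n" "w k \<noteq> 0"
    using v(1,2) unfolding w_def by (metis eq_vecI carrier_vecD index_zero_vec)
  have row_zero: "(\<Sum>j=0..<n. ((if i = j then 1 - s else 0) + s * E i j) * w j) = 0" if "i < n" for i
  proof -
    have "(?M *\<^sub>v v) $ i = 0" using v(3) that by simp
    then show ?thesis using that v(1) by (simp add: w_def scalar_prod_def)
  qed
  have "0 = (\<Sum>i=0..<n. w i * (\<Sum>j=0..<n. ((if i = j then 1 - s else 0) + s * E i j) * w j))"
    using row_zero by simp
  also have "\<dots> = (1 - s) * (\<Sum>i=0..<n. w i ^ 2) + s * (\<Sum>i=0..<n. \<Sum>j=0..<n. w i * E i j * w j)"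
  proof -
    have "w i * (((if i = j then 1 - s else 0) + s * E i j) * w j)
        = (if i = j then (1 - s) * w i ^ 2 else 0) + s * (w i * E i j * w j)" for i j
      by (simp add: algebra_simps power2_eq_square)
    then show ?thesis
      by (simp add: sum_distrib_left sum.distrib)
  qed
  also have "\<dots> > 0"
  proof -
    have "0 < (\<Sum>i=0..<n. w i ^ 2)" using k by (intro sum_pos2[of _ k]) auto
    moreover have "0 \<le> (\<Sum>i=0..<n. \<Sum>j=0..<n. w i * E i j * w j)"
      using E unfolding pos_semidef_def by blast
    ultimately show ?thesis using s by (simp add: add_pos_nonneg)
  qed
  finally show False by simp
qed

text \<open>The determinant along the segment from the identity to a positive semidefinite matrix
  starts at 1 and never vanishes before the endpoint, so by continuity it cannot end negative.\<close>
lemma det_pos_semidef_nonneg: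
  assumes "pos_semidef n E"
  shows "0 \<le> det (mat n n (\<lambda>(i, j). E i j))"
proof (rule ccontr)
  define g where "g s = det (mat n n (\<lambda>(i, j). (if i = j then 1 - s else 0) + s * E i j))" for s :: real
  assume "\<not> ?thesis"
  moreover have "g 1 = det (mat n n (\<lambda>(i, j). E i j))"
    unfolding g_def by (intro arg_cong[where f = det] eq_matI) auto
  ultimately have "g 1 < 0" by simp
  moreover have "g 0 = det (1\<^sub>m n)"
    unfolding g_def by (intro arg_cong[where f = det] eq_matI) auto
  moreover have "continuous_on {0..1} g"
  proof -
    have "continuous_on {0..1} (\<lambda>s::real. if b then 1 - s else 0)" for b
      by (cases b) (auto intro: continuous_intros)
    then show ?thesis
      unfolding g_def det_mat_eq_sum_permutes prod.case by (intro continuous_intros)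
  qed
  ultimately obtain s where s: "0 \<le> s" "s \<le> 1" "g s = 0"
    using IVT2'[of g 1 0 0] by force
  with \<open>g 1 < 0\<close> have "s < 1" by (cases "s = 1") auto
  with det_convex_identity_pos_semidef_nonzero[OF assms s(1)] s(3) show False
    by (simp add: g_def)
qed

lemma principal_minor_nonneg:
  assumes "pos_semidef n S"
  shows "0 \<le> principal_minor n K S"
  using det_pos_semidef_nonneg[OF pos_semidef_pad_identity[OF assms, of K]]
  by (simp add: principal_minor_def)

section \<open>Arithmetic and geometric means\<close>

lemma mult_le_midpoint_sq:
  fixes a b :: real
  shows "a * b \<le> ((a + b) / 2)\<^sup>2" and "a \<noteq> b \<Longrightarrow> a * b < ((a + b) / 2)\<^sup>2"
proof -
  have gap: "((a + b) / 2)\<^sup>2 = a * b + ((a - b) / 2)\<^sup>2"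
    by (simp add: power2_eq_square field_simps)
  show "a * b \<le> ((a + b) / 2)\<^sup>2" unfolding gap by simp
  show "a \<noteq> b \<Longrightarrow> a * b < ((a + b) / 2)\<^sup>2" unfolding gap by simp
qed

lemma midpoint_inverse_sq_le:
  fixes x y c :: real
  assumes "0 < x" "0 < y"
  shows "(c / ((x + y) / 2))\<^sup>2 \<le> c / x * (c / y)"
    and "x \<noteq> y \<Longrightarrow> 0 < c \<Longrightarrow> (c / ((x + y) / 2))\<^sup>2 < c / x * (c / y)"
proof -
  have eq: "(c / ((x + y) / 2))\<^sup>2 = c\<^sup>2 / ((x + y) / 2)\<^sup>2" "c / x * (c / y) = c\<^sup>2 / (x * y)"
    by (simp_all add: power_divide power2_eq_square)
  have "x * y \<le> ((x + y) / 2)\<^sup>2" by (rule mult_le_midpoint_sq)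
  then show "(c / ((x + y) / 2))\<^sup>2 \<le> c / x * (c / y)"
    unfolding eq using assms by (intro divide_left_mono) auto
  assume "x \<noteq> y" "0 < c"
  then have "x * y < ((x + y) / 2)\<^sup>2" by (intro mult_le_midpoint_sq(2))
  then show "(c / ((x + y) / 2))\<^sup>2 < c / x * (c / y)"
    unfolding eq using assms \<open>0 < c\<close> by (intro divide_strict_left_mono) auto
qed

text \<open>Factorwise AM-GM gives R^2 <= P Q for the three products R, P, Q below,
  and P Q <= ((P + Q) / 2)^2.\<close>
lemma prod_midpoint_inverse_le:
  fixes x y :: "'a \<Rightarrow> real"
  assumes T: "finite T" and pos: "\<And>i. i \<in> T \<Longrightarrow> 0 < x i \<and> 0 < y i" and c: "0 < c"
  shows "(\<Prod>i\<in>T. c / ((x i + y i) / 2)) \<le> ((\<Prod>i\<in>T. c / x i) + (\<Prod>i\<in>T. c / y i)) / 2"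
    and "\<exists>i\<in>T. x i \<noteq> y i \<Longrightarrow>
      (\<Prod>i\<in>T. c / ((x i + y i) / 2)) < ((\<Prod>i\<in>T. c / x i) + (\<Prod>i\<in>T. c / y i)) / 2"
proof -
  let ?R = "\<Prod>i\<in>T. c / ((x i + y i) / 2)"
  let ?P = "\<Prod>i\<in>T. c / x i"
  let ?Q = "\<Prod>i\<in>T. c / y i"
  have PQ: "0 \<le> (?P + ?Q) / 2" using pos c by (simp add: prod_nonneg less_imp_le)
  have R2: "?R\<^sup>2 = (\<Prod>i\<in>T. (c / ((x i + y i) / 2))\<^sup>2)" by (rule prod_power_distrib)
  have PQ_prod: "?P * ?Q = (\<Prod>i\<in>T. c / x i * (c / y i))" by (rule prod.distrib[symmetric])
  have am_gm: "?P * ?Q \<le> ((?P + ?Q) / 2)\<^sup>2" by (rule mult_le_midpoint_sq)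
  have factor_le: "0 \<le> (c / ((x i + y i) / 2))\<^sup>2 \<and> (c / ((x i + y i) / 2))\<^sup>2 \<le> c / x i * (c / y i)"
    if "i \<in> T" for i
    using midpoint_inverse_sq_le(1) pos[OF that] by simp
  have "?R\<^sup>2 \<le> ?P * ?Q"
    unfolding R2 PQ_prod by (rule prod_mono) (rule factor_le)
  then have "?R\<^sup>2 \<le> ((?P + ?Q) / 2)\<^sup>2"
    using am_gm by (rule order_trans)
  then show "?R \<le> (?P + ?Q) / 2"
    using PQ by (rule power2_le_imp_le)
  assume "\<exists>i\<in>T. x i \<noteq> y i"
  then obtain k where k: "k \<in> T" "x k \<noteq> y k" by blast
  have "?R\<^sup>2 < ?P * ?Q"
    unfolding R2 PQ_prod
  proof (rule prod_mono_strict[OF k(1) _ T factor_le])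
    show "(c / ((x k + y k) / 2))\<^sup>2 < c / x k * (c / y k)"
      using pos[OF k(1)] k(2) c by (intro midpoint_inverse_sq_le(2)) auto
    show "0 < c / x i * (c / y i)" if "i \<in> T" for i
      using pos[OF that] c by simp
  qed
  then have "?R\<^sup>2 < ((?P + ?Q) / 2)\<^sup>2"
    using am_gm by (rule less_le_trans)
  then show "?R < (?P + ?Q) / 2"
    using PQ by (rule power_less_imp_less_base)
qed

section \<open>Covariance of the time-point means\<close>

text \<open>Covariance matrix se2 M_0(z)^-1 + Sigma of the vector of time-point means.\<close>
definition mean_cov :: "nat \<Rightarrow> real \<Rightarrow> (nat \<Rightarrow> nat \<Rightarrow> real) \<Rightarrow> (nat \<Rightarrow> real) \<Rightarrow> real mat" where
  "mean_cov n se2 S z = mat n n (\<lambda>(i, j). (if i = j then se2 / z i else 0) + S i j)"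

lemma det_mean_cov_expand:
  "det (mean_cov n se2 S z)
    = (\<Sum>K\<in>Pow {0..<n}. (\<Prod>i\<in>{0..<n} - K. se2 / z i) * principal_minor n K S)"
  unfolding mean_cov_def by (rule det_diag_plus)

lemma det_mean_cov_pos:
  assumes S: "pos_semidef n S" and se2: "0 < se2" and z: "\<And>i. i < n \<Longrightarrow> 0 < z i"
  shows "0 < det (mean_cov n se2 S z)"
proof -
  have "0 < (\<Prod>i\<in>{0..<n} - {}. se2 / z i) * principal_minor n {} S"
    using se2 z by (simp, intro prod_pos) simp
  also have "\<dots> \<le> det (mean_cov n se2 S z)"
    unfolding det_mean_cov_expand
  proof (rule member_le_sum)
    fix K
    show "0 \<le> (\<Prod>i\<in>{0..<n} - K. se2 / z i) * principal_minor n K S"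
      using z less_imp_le[OF se2]
      by (intro mult_nonneg_nonneg prod_nonneg principal_minor_nonneg[OF S] divide_nonneg_pos) auto
  qed simp_all
  finally show ?thesis .
qed

lemma det_mean_cov_midpoint_less:
  assumes S: "pos_semidef n S" and se2: "0 < se2"
    and x: "\<And>i. i < n \<Longrightarrow> 0 < x i" and y: "\<And>i. i < n \<Longrightarrow> 0 < y i"
    and differ: "\<exists>i<n. x i \<noteq> y i"
  shows "det (mean_cov n se2 S (\<lambda>i. (x i + y i) / 2))
    < (det (mean_cov n se2 S x) + det (mean_cov n se2 S y)) / 2"
proof -
  let ?U = "{0..<n}"
  let ?mid = "\<lambda>K. \<Prod>i\<in>?U - K. se2 / ((x i + y i) / 2)"
  let ?avg = "\<lambda>K. ((\<Prod>i\<in>?U - K. se2 / x i) + (\<Prod>i\<in>?U - K. se2 / y i)) / 2"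
  have "det (mean_cov n se2 S (\<lambda>i. (x i + y i) / 2)) = (\<Sum>K\<in>Pow ?U. ?mid K * principal_minor n K S)"
    by (rule det_mean_cov_expand)
  also have "\<dots> < (\<Sum>K\<in>Pow ?U. ?avg K * principal_minor n K S)"
  proof (rule sum_strict_mono_ex1)
    show "\<forall>K\<in>Pow ?U. ?mid K * principal_minor n K S \<le> ?avg K * principal_minor n K S"
    proof
      fix K
      have "?mid K \<le> ?avg K"
        by (rule prod_midpoint_inverse_le(1)) (use x y se2 in auto)
      then show "?mid K * principal_minor n K S \<le> ?avg K * principal_minor n K S"
        by (rule mult_right_mono) (rule principal_minor_nonneg[OF S])
    qed
    have "?mid {} < ?avg {}"
      by (rule prod_midpoint_inverse_le(2)) (use x y se2 differ in auto)
    then show "\<exists>K\<in>Pow ?U. ?mid K * principal_minor n K S < ?avg K * principal_minor n K S"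
      by (intro bexI[of _ "{}"]) simp_all
  qed simp
  also have "\<dots> = (det (mean_cov n se2 S x) + det (mean_cov n se2 S y)) / 2"
    unfolding det_mean_cov_expand sum.distrib[symmetric] sum_divide_distrib
    by (intro sum.cong refl) (simp add: field_simps)
  finally show ?thesis .
qed

lemma det_mean_cov_permute:
  assumes r: "r permutes {0..<n}" and S: "\<And>i j. i < n \<Longrightarrow> j < n \<Longrightarrow> S (r i) (r j) = S i j"
  shows "det (mean_cov n se2 S (z \<circ> r)) = det (mean_cov n se2 S z)"
proof -
  let ?F = "\<lambda>(i, j). (if i = j then se2 / z i else 0) + S i j"
  have "mean_cov n se2 S (z \<circ> r) = mat n n (\<lambda>(i, j). ?F (r i, r j))"
  proof (rule eq_matI)
    fix i j assume "i < dim_row (mat n n (\<lambda>(i, j). ?F (r i, r j)))"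
      and "j < dim_col (mat n n (\<lambda>(i, j). ?F (r i, r j)))"
    then have ij: "i < n" "j < n" by simp_all
    have "r i = r j \<longleftrightarrow> i = j" using permutes_inj[OF r] by (simp add: inj_eq)
    with ij S[OF ij] show "mean_cov n se2 S (z \<circ> r) $$ (i, j) = mat n n (\<lambda>(i, j). ?F (r i, r j)) $$ (i, j)"
      by (simp add: mean_cov_def)
  qed (simp_all add: mean_cov_def)
  also have "det \<dots> = det (mat n n ?F)"
    by (rule det_mat_permute_conj[OF r])
  finally show ?thesis
    by (simp only: mean_cov_def)
qed

lemma reverse_permutes: "(\<lambda>i. if i < n then n - 1 - i else i) permutes {0..<n::nat}"
proof (rule bij_imp_permutes)
  show "bij_betw (\<lambda>i. if i < n then n - 1 - i else i) {0..<n} {0..<n}"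
    by (rule bij_betw_byWitness[where f' = "\<lambda>i. if i < n then n - 1 - i else i"]) auto
qed simp

section \<open>The autoregressive covariance\<close>

definition ar_kernel :: "real \<Rightarrow> real \<Rightarrow> nat \<Rightarrow> nat \<Rightarrow> real" where
  "ar_kernel sg2 rho i j = sg2 * rho ^ (if i \<le> j then j - i else i - j)"

lemma ar_cov_eq: "ar_cov J sg2 rho = mat J J (\<lambda>(i, j). ar_kernel sg2 rho i j)"
  by (simp add: ar_cov_def ar_kernel_def)

lemma ar_kernel_reverse:
  assumes "i < n" "j < n"
  shows "ar_kernel sg2 rho (n - 1 - i) (n - 1 - j) = ar_kernel sg2 rho i j"
  using assms by (auto simp: ar_kernel_def)

text \<open>Cholesky factor of the AR(1) correlation matrix, read off from the recursion
  x_0 = e_0, x_i = rho x_(i-1) + sqrt (1 - rho^2) e_i driven by white noise e.\<close>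
definition ar_factor :: "real \<Rightarrow> nat \<Rightarrow> nat \<Rightarrow> real" where
  "ar_factor rho i k = (if k \<le> i then rho ^ (i - k) * (if k = 0 then 1 else sqrt (1 - rho\<^sup>2)) else 0)"

lemma ar_factor_row_norm:
  assumes "0 \<le> rho" "rho \<le> 1"
  shows "(\<Sum>k\<le>i. ar_factor rho i k ^ 2) = 1"
proof (induction i)
  case 0
  then show ?case by (simp add: ar_factor_def)
next
  case (Suc i)
  have "(\<Sum>k\<le>i. ar_factor rho (Suc i) k ^ 2) = rho\<^sup>2 * (\<Sum>k\<le>i. ar_factor rho i k ^ 2)"
    by (simp add: sum_distrib_left ar_factor_def Suc_diff_le power_mult_distrib ac_simps)
  moreover have "ar_factor rho (Suc i) (Suc i) ^ 2 = 1 - rho\<^sup>2"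
    using assms by (simp add: ar_factor_def power_le_one)
  ultimately show ?case
    using Suc.IH by simp
qed

lemma ar_factor_gram:
  assumes "0 \<le> rho" "rho \<le> 1" "i < n" "j < n"
  shows "(\<Sum>k<n. ar_factor rho i k * ar_factor rho j k) = rho ^ (if i \<le> j then j - i else i - j)"
proof -
  have le: "(\<Sum>k<n. ar_factor rho i k * ar_factor rho j k) = rho ^ (j - i)"
    if "i \<le> j" "j < n" for i j
  proof -
    have "ar_factor rho i k * ar_factor rho j k = (if k \<le> i then rho ^ (j - i) * ar_factor rho i k ^ 2 else 0)" for k
      using \<open>i \<le> j\<close> by (auto simp: ar_factor_def power2_eq_square power_add[symmetric])
    then have "(\<Sum>k<n. ar_factor rho i k * ar_factor rho j k) = (\<Sum>k\<le>i. rho ^ (j - i) * ar_factor rho i k ^ 2)"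
      using that by (simp add: sum.If_cases Int_absorb1 atMost_def lessThan_def subset_eq)
    then show ?thesis
      by (simp add: sum_distrib_left[symmetric] ar_factor_row_norm[OF assms(1,2)])
  qed
  show ?thesis
    using le[of i j] le[of j i] assms by (auto simp: mult.commute)
qed

lemma pos_semidef_ar_kernel:
  assumes "0 \<le> rho" "rho \<le> 1" "0 \<le> sg2"
  shows "pos_semidef n (ar_kernel sg2 rho)"
proof -
  have "pos_semidef n (\<lambda>i j. rho ^ (if i \<le> j then j - i else i - j))"
    using pos_semidef_gram[of n "ar_factor rho" n]
    by (subst pos_semidef_cong[where T = "\<lambda>i j. \<Sum>k<n. ar_factor rho i k * ar_factor rho j k"])
      (simp_all add: ar_factor_gram assms)
  then show ?thesis
    using pos_semidef_scale[OF _ assms(3)] by (simp add: ar_kernel_def[abs_def])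
qed

lemma det_mean_cov_ar_reverse:
  "det (mean_cov n se2 (ar_kernel sg2 rho) (\<lambda>i. z (n - 1 - i))) = det (mean_cov n se2 (ar_kernel sg2 rho) z)"
proof -
  let ?r = "\<lambda>i. if i < n then n - 1 - i else i"
  have "mean_cov n se2 (ar_kernel sg2 rho) (\<lambda>i. z (n - 1 - i)) = mean_cov n se2 (ar_kernel sg2 rho) (z \<circ> ?r)"
    by (rule eq_matI) (simp_all add: mean_cov_def)
  also have "det \<dots> = det (mean_cov n se2 (ar_kernel sg2 rho) z)"
  proof (rule det_mean_cov_permute[OF reverse_permutes])
    fix i j assume "i < n" "j < n"
    then show "ar_kernel sg2 rho (?r i) (?r j) = ar_kernel sg2 rho i j"
      using ar_kernel_reverse[of i n j] by simp
  qed
  finally show ?thesis .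
qed

section \<open>Information matrix and admissible designs\<close>

lemma M0_half_eq_mat_diag: "M0_half J z = mat_diag J (\<lambda>i. sqrt (z i))"
  by (rule eq_matI) (simp_all add: M0_half_def mat_diag_def)

lemma info_mat_middle_eq:
  assumes z: "\<And>i. i < J \<Longrightarrow> 0 < z i"
  shows "se2 \<cdot>\<^sub>m 1\<^sub>m J + M0_half J z * mat J J (\<lambda>(i, j). S i j) * M0_half J z
    = M0_half J z * mean_cov J se2 S z * M0_half J z"
proof -
  have "sqrt (z i) * (se2 / z i) * sqrt (z i) = se2" if "i < J" for i
  proof -
    have "sqrt (z i) * (se2 / z i) * sqrt (z i) = se2 * (sqrt (z i) * sqrt (z i)) / z i"
      by simp
    also have "\<dots> = se2" using z[OF that] by simp
    finally show ?thesis .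
  qed
  then show ?thesis
    unfolding M0_half_eq_mat_diag
    by (simp add: mat_diag_sandwich mean_cov_def, intro eq_matI) (auto simp: algebra_simps)
qed

lemma det_info_mat:
  assumes A: "A \<in> carrier_mat J J" and z: "\<And>i. i < J \<Longrightarrow> 0 < z i"
    and C: "det (mean_cov J se2 S z) \<noteq> 0"
  shows "det (info_mat J se2 (mat J J (\<lambda>(i, j). S i j)) A z) = (det A)\<^sup>2 / det (mean_cov J se2 S z)"
proof -
  let ?H = "M0_half J z" and ?C = "mean_cov J se2 S z"
  let ?B = "?H * ?C * ?H"
  have H: "?H \<in> carrier_mat J J" and C_carrier: "?C \<in> carrier_mat J J"
    by (simp_all add: M0_half_def mean_cov_def)
  have B: "?B \<in> carrier_mat J J" using H C_carrier by simp
  have "det ?H = (\<Prod>i=0..<J. sqrt (z i))"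
    by (simp add: M0_half_eq_mat_diag det_mat_diag)
  then have H_nz: "det ?H \<noteq> 0" using z by (simp add: less_imp_neq[symmetric])
  have det_B: "det ?B = det ?H * det ?C * det ?H"
    using H C_carrier by (simp add: det_mult[of _ J])
  with H_nz C have B_nz: "det ?B \<noteq> 0" by simp
  have "det ?B * det (minv ?B) = 1"
    using minv_right_inverse[OF B B_nz] det_mult[OF B] by (metis det_one)
  then have det_Bi: "det (minv ?B) = 1 / det ?B"
    using B_nz by (simp add: field_simps)
  have "det (info_mat J se2 (mat J J (\<lambda>(i, j). S i j)) A z)
      = det (transpose_mat A * ?H * minv ?B * ?H * A)"
    by (simp add: info_mat_def info_mat_middle_eq[OF z])
  also have "\<dots> = det A * det ?H * det (minv ?B) * det ?H * det A"
  proof -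
    have At: "transpose_mat A \<in> carrier_mat J J" using A by simp
    note Bi = minv_right_inverse(2)[OF B B_nz]
    have c1: "transpose_mat A * ?H \<in> carrier_mat J J" using At H by simp
    have c2: "transpose_mat A * ?H * minv ?B \<in> carrier_mat J J" using c1 Bi by simp
    have c3: "transpose_mat A * ?H * minv ?B * ?H \<in> carrier_mat J J" using c2 H by simp
    show ?thesis
      by (simp only: det_mult[OF c3 A] det_mult[OF c2 H] det_mult[OF c1 Bi] det_mult[OF At H]
          det_transpose[OF A])
  qed
  also have "\<dots> = (det A)\<^sup>2 / det ?C"
    using H_nz unfolding det_Bi det_B by (simp add: power2_eq_square field_simps)
  finally show ?thesis .
qed

lemma diag_design_eq_mat_diag: "diag_design J z = mat_diag J z"
  by (rule eq_matI) (simp_all add: diag_design_def mat_diag_def)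

lemma estimable_imp_factor:
  assumes A: "A \<in> carrier_mat J J" and es: "estimable J A z"
  obtains W where "W \<in> carrier_mat J J" and "A = mat_diag J z * W"
proof -
  obtain w where w: "\<And>k. k < J \<Longrightarrow> w k \<in> carrier_vec J \<and> col A k = mat_diag J z *\<^sub>v w k"
    using es A unfolding estimable_def diag_design_eq_mat_diag by (metis carrier_matD(2))
  let ?W = "mat J J (\<lambda>(i, k). w k $ i)"
  have "A = mat_diag J z * ?W"
  proof (rule mat_col_eqI)
    fix k assume "k < dim_col (mat_diag J z * ?W)"
    then have k: "k < J" by simp
    have "col (mat_diag J z * ?W) k = mat_diag J z *\<^sub>v col ?W k"
      by (rule col_mult2[of _ J J _ J]) (simp_all add: k)
    also have "col ?W k = w k" using w[OF k] k by (auto intro!: eq_vecI)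
    finally show "col A k = col (mat_diag J z * ?W) k"
      using w[OF k] by simp
  qed (use A in \<open>simp_all add: mat_diag_def\<close>)
  then show ?thesis using that[of ?W] by simp
qed

lemma estimable_imp_pos:
  assumes A: "A \<in> carrier_mat J J" and "det A \<noteq> 0"
    and "approx_design J I z" and "estimable J A z" and i: "i < J"
  shows "0 < z i"
proof -
  obtain W where W: "W \<in> carrier_mat J J" and AW: "A = mat_diag J z * W"
    using estimable_imp_factor[OF A \<open>estimable J A z\<close>] by blast
  have "det A = (\<Prod>i=0..<J. z i) * det W"
    unfolding AW using W by (simp add: det_mult[of _ J] det_mat_diag)
  with \<open>det A \<noteq> 0\<close> i have "z i \<noteq> 0" by auto
  moreover have "0 \<le> z i" using \<open>approx_design J I z\<close> i by (simp add: approx_design_def)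
  ultimately show ?thesis by simp
qed

lemma pos_imp_estimable:
  assumes A: "A \<in> carrier_mat J J" and "det A \<noteq> 0" and z: "\<And>i. i < J \<Longrightarrow> 0 < z i"
  shows "estimable J A z"
  unfolding estimable_def
proof
  show "\<forall>v\<in>carrier_vec (dim_col A). A *\<^sub>v v = 0\<^sub>v (dim_row A) \<longrightarrow> v = 0\<^sub>v (dim_col A)"
    using det_0_iff_vec_prod_zero[OF A] \<open>det A \<noteq> 0\<close> A by auto
  show "\<forall>k<dim_col A. \<exists>w\<in>carrier_vec J. col A k = diag_design J z *\<^sub>v w"
  proof (intro allI impI)
    fix k assume "k < dim_col A"
    then have k: "k < J" using A by simp
    let ?w = "vec J (\<lambda>i. A $$ (i, k) / z i)"
    have "col A k = mat_diag J z *\<^sub>v ?w"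
    proof (rule eq_vecI)
      fix i assume "i < dim_vec (mat_diag J z *\<^sub>v ?w)"
      then have i: "i < J" by (simp add: mat_diag_def)
      have "(mat_diag J z *\<^sub>v ?w) $ i = z i * (A $$ (i, k) / z i)"
        using i by (simp add: mat_diag_mult_vec)
      then show "col A k $ i = (mat_diag J z *\<^sub>v ?w) $ i"
        using i k A z[OF i] by simp
    qed (use A in \<open>simp add: mat_diag_def\<close>)
    then show "\<exists>w\<in>carrier_vec J. col A k = diag_design J z *\<^sub>v w"
      unfolding diag_design_eq_mat_diag by (intro bexI[of _ ?w]) simp_all
  qed
qed

lemma approx_design_reverse_midpoint:
  assumes "approx_design J I z"
  shows "approx_design J I (\<lambda>i. (z i + z (J - 1 - i)) / 2)"
proof -
  have "(\<Sum>i<J. z (J - 1 - i)) = (\<Sum>i<J. z i)"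
    using sum.nat_diff_reindex[of z J] by simp
  with assms show ?thesis
    by (simp add: approx_design_def sum.distrib sum_divide_distrib[symmetric])
qed

lemma det_info_mat_ar_cov:
  assumes A: "A \<in> carrier_mat J J" and se2: "0 < se2" and "0 \<le> sg2" "0 \<le> rho" "rho \<le> 1"
    and z: "\<And>i. i < J \<Longrightarrow> 0 < z i"
  shows "det (info_mat J se2 (ar_cov J sg2 rho) A z) = (det A)\<^sup>2 / det (mean_cov J se2 (ar_kernel sg2 rho) z)"
proof -
  have "pos_semidef J (ar_kernel sg2 rho)"
    using assms by (intro pos_semidef_ar_kernel)
  then have "0 < det (mean_cov J se2 (ar_kernel sg2 rho) z)"
    by (rule det_mean_cov_pos[OF _ se2]) (rule z)
  then show ?thesis
    unfolding ar_cov_eq using z by (intro det_info_mat[OF A]) auto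
qed

lemma det_info_mat_symmetrize_less:
  assumes A: "A \<in> carrier_mat J J" "det A \<noteq> 0"
    and par: "0 < se2" "0 \<le> sg2" "0 \<le> rho" "rho \<le> 1"
    and z: "\<And>i. i < J \<Longrightarrow> 0 < z i" and differ: "\<exists>i<J. z i \<noteq> z (J - 1 - i)"
  defines "m \<equiv> \<lambda>i. (z i + z (J - 1 - i)) / 2"
  shows "0 < det (info_mat J se2 (ar_cov J sg2 rho) A z)"
    and "det (info_mat J se2 (ar_cov J sg2 rho) A z) < det (info_mat J se2 (ar_cov J sg2 rho) A m)"
proof -
  let ?C = "\<lambda>z. det (mean_cov J se2 (ar_kernel sg2 rho) z)"
  have S: "pos_semidef J (ar_kernel sg2 rho)"
    using par by (intro pos_semidef_ar_kernel)
  have m_pos: "0 < m i" if "i < J" for i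
    using z[OF that] z[of "J - 1 - i"] that by (simp add: m_def)
  have "?C m < (?C z + ?C (\<lambda>i. z (J - 1 - i))) / 2"
    unfolding m_def using S par(1) z differ by (intro det_mean_cov_midpoint_less) auto
  also have "\<dots> = ?C z"
    using det_mean_cov_ar_reverse[of J se2 sg2 rho z] by simp
  finally have "?C m < ?C z" .
  moreover have "0 < ?C m"
    by (rule det_mean_cov_pos[OF S par(1)]) (rule m_pos)
  moreover have "0 < ?C z"
    by (rule det_mean_cov_pos[OF S par(1)]) (rule z)
  moreover have "0 < (det A)\<^sup>2" using A(2) by simp
  moreover have "det (info_mat J se2 (ar_cov J sg2 rho) A z) = (det A)\<^sup>2 / ?C z"
    by (rule det_info_mat_ar_cov[OF A(1) par]) (rule z)
  moreover have "det (info_mat J se2 (ar_cov J sg2 rho) A m) = (det A)\<^sup>2 / ?C m"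
    by (rule det_info_mat_ar_cov[OF A(1) par]) (rule m_pos)
  ultimately show "0 < det (info_mat J se2 (ar_cov J sg2 rho) A z)"
    and "det (info_mat J se2 (ar_cov J sg2 rho) A z) < det (info_mat J se2 (ar_cov J sg2 rho) A m)"
    by (simp_all add: divide_strict_left_mono)
qed

theorem lemma5:
  fixes J :: nat and se2 sg2 rho I :: real and A :: "real mat" and xi :: "nat \<Rightarrow> real"
  assumes "J \<ge> 1"
    and "se2 > 0" and "sg2 > 0" and "0 \<le> rho" and "rho \<le> 1"
    and "A \<in> carrier_mat J J" and "det A \<noteq> 0"
    and "I > 0"
    and "D_optimal J I se2 (ar_cov J sg2 rho) A xi"
  shows "\<forall>j<J. xi j = xi (J - 1 - j)"
proof (rule ccontr)
  note A = \<open>A \<in> carrier_mat J J\<close> \<open>det A \<noteq> 0\<close>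
  have par: "0 < se2" "0 \<le> sg2" "0 \<le> rho" "rho \<le> 1" using assms by simp_all
  let ?D = "\<lambda>z. det (info_mat J se2 (ar_cov J sg2 rho) A z)"
  define m where "m i = (xi i + xi (J - 1 - i)) / 2" for i
  from \<open>D_optimal J I se2 (ar_cov J sg2 rho) A xi\<close>
  have xi: "approx_design J I xi" "estimable J A xi"
    and opt: "\<And>z. approx_design J I z \<Longrightarrow> estimable J A z \<Longrightarrow> ln (?D z) \<le> ln (?D xi)"
    unfolding D_optimal_def by blast+
  have xi_pos: "0 < xi i" if "i < J" for i
    using estimable_imp_pos[OF A xi that] .
  assume "\<not> (\<forall>j<J. xi j = xi (J - 1 - j))"
  then have "\<exists>i<J. xi i \<noteq> xi (J - 1 - i)" by blast
  from det_info_mat_symmetrize_less[OF A par xi_pos this]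
  have "0 < ?D xi" "?D xi < ?D m"
    by (simp_all add: m_def[abs_def])
  then have "ln (?D xi) < ln (?D m)" by simp
  moreover have "approx_design J I m"
    unfolding m_def[abs_def] by (rule approx_design_reverse_midpoint[OF xi(1)])
  moreover have "estimable J A m"
    using xi_pos by (intro pos_imp_estimable[OF A]) (simp add: m_def add_pos_pos)
  ultimately show False
    using opt[of m] by simp
qed

end
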